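(* Consider the setting described in the context, with distinct treatments $s\neq t$. Assume (C1), (C2), (C3), that $X$ and $XY^{(\ell)}$, $\ell=1,\dots,k$, have finite second-order moments, and that ${\rm var}(X\mid Z=z)$ is positive definite for every $z\in\mathcal Z$. Let $\beta_\ell(z)=\{{\rm var}(X\mid Z=z)\}^{-1}{\rm cov}(X,Y^{(\ell)}\mid Z=z)$, $\beta(z)=\sum_{\ell=1}^k\pi_\ell\beta_\ell(z)$, and \begin{align*} \sigma_U^2&=E\{{\rm var}(Y^{(t)}\mid Z)/\pi_t+{\rm var}(Y^{(s)}\mid Z)/\pi_s\},\\ \sigma_A^2&=E[{\rm var}\{Y^{(t)}-X^T\beta_t(Z)\mid Z\}/\pi_t+{\rm var}\{Y^{(s)}-X^T\beta_s(Z)\mid Z\}/\pi_s]+E[\{\beta_t(Z)-\beta_s(Z)\}^T{\rm var}(X\mid Z)\{\beta_t(Z)-\beta_s(Z)\}],\\ \sigma_B^2&=E[{\rm var}\{Y^{(t)}-X^T\beta(Z)\mid Z\}/\pi_t+{\rm var}\{Y^{(s)}-X^T\beta(Z)\mid Z\}/\pi_s]. \end{align*} Then \begin{align*} \sigma_U^2-\sigma_A^2=&\,E\big[\{\pi_s\beta_t(Z)+\pi_t\beta_s(Z)\}^T{\rm var}(X\mid Z)\{\pi_s\beta_t(Z)+\pi_t\beta_s(Z)\}\big]\{\pi_t\pi_s(\pi_t+\pi_s)\}^{-1}\\ &+E\big[\{\beta_t(Z)-\beta_s(Z)\}^T{\rm var}(X\mid Z)\{\beta_t(Z)-\beta_s(Z)\}\big]\{(\pi_t+\pi_s)^{-1}-1\},\\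 \sigma_B^2-\sigma_A^2=&\,E\big[\{\beta_t(Z)-\beta(Z)\}^T{\rm var}(X\mid Z)\{\beta_t(Z)-\beta(Z)\}\big]\pi_t^{-1}+E\big[\{\beta_s(Z)-\beta(Z)\}^T{\rm var}(X\mid Z)\{\beta_s(Z)-\beta(Z)\}\big]\pi_s^{-1}\\ &-E\big[\{\beta_t(Z)-\beta_s(Z)\}^T{\rm var}(X\mid Z)\{\beta_t(Z)-\beta_s(Z)\}\big]. \end{align*} Consequently $\sigma_A^2\le\sigma_U^2$, with equality if and only if for every $z\in\mathcal Z$: $\pi_s\beta_t(z)+\pi_t\beta_s(z)=0$ and $\{\beta_t(z)-\beta_s(z)\}(1-\pi_t-\pi_s)=0$; and $\sigma_A^2\le\sigma_B^2$, with equality if and only if for every $z\in\mathcal Z$: $\beta(z)=\{\pi_s\beta_t(z)+\pi_t\beta_s(z)\}/(\pi_s+\pi_t)$ and $\{\beta_t(z)-\beta_s(z)\}(1-\pi_t-\pi_s)=0$.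
   Context: Setting: a trial compares $k\ge2$ treatments (fixed) with known assignment proportions $\pi_1,\dots,\pi_k\in(0,1)$, $\sum_t\pi_t=1$. Let $e_t$ be the $t$-th unit vector in $\mathbb R^k$. For patient $i=1,\dots,n$: $I_i\in\{e_1,\dots,e_k\}$ is the treatment indicator, $Y_i^{(1)},\dots,Y_i^{(k)}$ are potential responses, $W_i$ the observed covariate vector, $Z_i$ a discrete function of $W_i$ used in randomization, $X_i$ a vector-valued function of $W_i$. Observed $Y_i=Y_i^{(t)}$ iff $I_i=e_t$. Generic variables $(Y^{(1)},\dots,Y^{(k)},W)$, $Z$, $X$. Conditions: (C1) $(Y_i^{(1)},\dots,Y_i^{(k)},W_i)$, $i=1,\dots,n$, are i.i.d. as $(Y^{(1)},\dots,Y^{(k)},W)$, each $Y^{(t)}$ with finite second moments. (C2) $(I_1,\dots,I_n)$ and $\{(Y_i^{(1)},\dots,Y_i^{(k)},W_i)\}_{i}$ are conditionally independent given $Z_1,\dots,Z_n$. (C3) $Z$ takes finitely many values in $\mathcal Z$; ${\rm pr}(I_i=e_t\mid Z_1,\dots,Z_n)=\pi_t$ for all $t,i$; and for every $z\in\mathcal Z$ and $t$, $D_t(z)/n(z)\to0$ in probability, where $n(z)=\#\{i:Z_i=z\}$, $n_t(z)=\#\{i:Z_i=z,I_i=e_t\}$, $D_t(z)=n_t(z)-\pi_tn(z)$. *)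

theory Defs
  imports "HOL-Probability.Probability"
begin

text \<open>Conditional moments given a discrete variable Z at a value z
  (elementary conditioning on the event Z = z, which has positive probability).\<close>

definition cexp :: "'a measure \<Rightarrow> ('a \<Rightarrow> 'z) \<Rightarrow> 'z \<Rightarrow> ('a \<Rightarrow> real) \<Rightarrow> real" where
  "cexp M Z z V =
     (\<integral>\<omega>. indicator {\<omega>\<in>space M. Z \<omega> = z} \<omega> * V \<omega> \<partial>M) / measure M {\<omega>\<in>space M. Z \<omega> = z}"

definition ccov :: "'a measure \<Rightarrow> ('a \<Rightarrow> 'z) \<Rightarrow> 'z \<Rightarrow> ('a \<Rightarrow> real) \<Rightarrow> ('a \<Rightarrow> real) \<Rightarrow> real" where
  "ccov M Z z U V = cexp M Z z (\<lambda>\<omega>. (U \<omega> - cexp M Z z U) * (V \<omega> - cexp M Z z V))"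

definition cvar :: "'a measure \<Rightarrow> ('a \<Rightarrow> 'z) \<Rightarrow> 'z \<Rightarrow> ('a \<Rightarrow> real) \<Rightarrow> real" where
  "cvar M Z z U = ccov M Z z U U"

definition cvarX :: "'a measure \<Rightarrow> ('a \<Rightarrow> 'z) \<Rightarrow> 'z \<Rightarrow> ('a \<Rightarrow> real^'p) \<Rightarrow> real^'p^'p" where
  "cvarX M Z z X = (\<chi> i j. ccov M Z z (\<lambda>\<omega>. X \<omega> $ i) (\<lambda>\<omega>. X \<omega> $ j))"

definition ccovXY :: "'a measure \<Rightarrow> ('a \<Rightarrow> 'z) \<Rightarrow> 'z \<Rightarrow> ('a \<Rightarrow> real^'p) \<Rightarrow> ('a \<Rightarrow> real) \<Rightarrow> real^'p" where
  "ccovXY M Z z X Y = (\<chi> i. ccov M Z z (\<lambda>\<omega>. X \<omega> $ i) Y)"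

definition betaC :: "'a measure \<Rightarrow> ('a \<Rightarrow> 'z) \<Rightarrow> 'z \<Rightarrow> ('a \<Rightarrow> real^'p) \<Rightarrow> ('a \<Rightarrow> real) \<Rightarrow> real^'p" where
  "betaC M Z z X Y = matrix_inv (cvarX M Z z X) *v ccovXY M Z z X Y"

definition qf :: "real^'p^'p \<Rightarrow> real^'p \<Rightarrow> real" where
  "qf A v = v \<bullet> (A *v v)"

definition pos_def :: "real^'p^'p \<Rightarrow> bool" where
  "pos_def A \<longleftrightarrow> (\<forall>v. v \<noteq> 0 \<longrightarrow> v \<bullet> (A *v v) > 0)"

end

(*
  Within a stratum Z = z the regression coefficient beta_l(z) gives the decomposition
    var(Y - X^T c | z) = var(Y - X^T beta_l(z) | z) + Q_z(beta_l(z) - c),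
  where Q_z is the quadratic form of var(X | Z = z). Hence sigma_U - sigma_A and
  sigma_B - sigma_A are the averages over the strata of
    Q(beta_t - c)/pi_t + Q(beta_s - c)/pi_s - Q(beta_t - beta_s)
  with c = 0 and c = beta(Z) respectively. For p, q > 0 the identity
    Q(u)/p + Q(v)/q = Q(q u + p v)/(p q (p + q)) + Q(u - v)/(p + q)
  rewrites this as a combination of two quadratic forms with nonnegative weights (since
  pi_t + pi_s <= 1), and positive definiteness of var(X | Z) turns their vanishing into the
  stated conditions.
*)
theory Submission
  imports Defs
begin

definition square_integrable :: "'a measure \<Rightarrow> ('a \<Rightarrow> real) \<Rightarrow> bool" where
  "square_integrable M f \<longleftrightarrow> f \<in> borel_measurable M \<and> integrable M (\<lambda>\<omega>. (f \<omega>)\<^sup>2)"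

lemma integrable_square_integrable:
  assumes "finite_measure M" "square_integrable M f"
  shows "integrable M f"
  using assms finite_measure.square_integrable_imp_integrable unfolding square_integrable_def by blast

lemma integrable_mult_square_integrable:
  assumes "square_integrable M f" "square_integrable M g"
  shows "integrable M (\<lambda>\<omega>. f \<omega> * g \<omega>)"
proof (rule Bochner_Integration.integrable_bound)
  show "integrable M (\<lambda>\<omega>. (f \<omega>)\<^sup>2 + (g \<omega>)\<^sup>2)"
    using assms unfolding square_integrable_def by auto
  show "(\<lambda>\<omega>. f \<omega> * g \<omega>) \<in> borel_measurable M"
    using assms unfolding square_integrable_def by auto
  have "\<bar>f \<omega> * g \<omega>\<bar> \<le> (f \<omega>)\<^sup>2 + (g \<omega>)\<^sup>2" for \<omega>
  proof -
    have "2 * \<bar>f \<omega> * g \<omega>\<bar> \<le> (f \<omega>)\<^sup>2 + (g \<omega>)\<^sup>2"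
      using sum_squares_bound[of "\<bar>f \<omega>\<bar>" "\<bar>g \<omega>\<bar>"] by (simp add: abs_mult)
    then show ?thesis by linarith
  qed
  then show "AE \<omega> in M. norm (f \<omega> * g \<omega>) \<le> norm ((f \<omega>)\<^sup>2 + (g \<omega>)\<^sup>2)"
    by simp
qed

lemma square_integrable_add:
  assumes "square_integrable M f" "square_integrable M g"
  shows "square_integrable M (\<lambda>\<omega>. f \<omega> + g \<omega>)"
proof -
  have "(\<lambda>\<omega>. (f \<omega> + g \<omega>)\<^sup>2) = (\<lambda>\<omega>. (f \<omega>)\<^sup>2 + 2 * (f \<omega> * g \<omega>) + (g \<omega>)\<^sup>2)"
    by (simp add: power2_sum algebra_simps)
  then show ?thesis
    using assms integrable_mult_square_integrable[OF assms] unfolding square_integrable_def by auto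
qed

lemma square_integrable_scale:
  assumes "square_integrable M f"
  shows "square_integrable M (\<lambda>\<omega>. c * f \<omega>)"
  using assms borel_measurable_times[OF borel_measurable_const, of f M c]
  unfolding square_integrable_def by (simp add: power_mult_distrib)

lemma square_integrable_diff:
  assumes "square_integrable M f" "square_integrable M g"
  shows "square_integrable M (\<lambda>\<omega>. f \<omega> - g \<omega>)"
  using square_integrable_add[OF assms(1) square_integrable_scale[OF assms(2), of "-1"]] by simp

lemma square_integrable_sum:
  assumes "finite I" and "\<And>i. i \<in> I \<Longrightarrow> square_integrable M (f i)"
  shows "square_integrable M (\<lambda>\<omega>. \<Sum>i\<in>I. f i \<omega>)"
  using assms
proof (induction I rule: finite_induct)
  case empty
  show ?case by (simp add: square_integrable_def)
next
  case insert
  then show ?case by (simp add: square_integrable_add)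
qed

lemma square_integrable_const:
  "finite_measure M \<Longrightarrow> square_integrable M (\<lambda>_. c)"
  unfolding square_integrable_def by (simp add: finite_measure.integrable_const)

lemma square_integrable_component:
  fixes X :: "'a \<Rightarrow> real^'n"
  assumes X: "X \<in> borel_measurable M" and "integrable M (\<lambda>\<omega>. (norm (X \<omega>))\<^sup>2)"
  shows "square_integrable M (\<lambda>\<omega>. X \<omega> $ i)"
  unfolding square_integrable_def
proof
  show Xi: "(\<lambda>\<omega>. X \<omega> $ i) \<in> borel_measurable M"
    using X by (rule measurable_compose[OF _ borel_measurable_nth])
  have "\<bar>X \<omega> $ i\<bar>\<^sup>2 \<le> (norm (X \<omega>))\<^sup>2" for \<omega>
    by (rule power_mono[OF component_le_norm_cart]) simp
  then show "integrable M (\<lambda>\<omega>. (X \<omega> $ i)\<^sup>2)"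
    by (intro Bochner_Integration.integrable_bound[OF assms(2)]) (use Xi in auto)
qed

lemma cexp_scale: "cexp M Z z (\<lambda>\<omega>. c * f \<omega>) = c * cexp M Z z f"
  unfolding cexp_def by (simp add: mult.left_commute)

context
  fixes M :: "'a measure" and Z :: "'a \<Rightarrow> 'z" and z :: 'z
  assumes event: "{\<omega>\<in>space M. Z \<omega> = z} \<in> sets M"
begin

lemma integrable_indicator_event:
  fixes f :: "'a \<Rightarrow> real"
  shows "integrable M f \<Longrightarrow> integrable M (\<lambda>\<omega>. indicator {\<omega>\<in>space M. Z \<omega> = z} \<omega> * f \<omega>)"
  using integrable_mult_indicator[OF event, of f] by simp

lemma cexp_diff:
  "integrable M f \<Longrightarrow> integrable M g
    \<Longrightarrow> cexp M Z z (\<lambda>\<omega>. f \<omega> - g \<omega>) = cexp M Z z f - cexp M Z z g"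
  unfolding cexp_def by (simp add: integrable_indicator_event right_diff_distrib diff_divide_distrib)

lemma cexp_sum:
  "(\<And>i. i \<in> I \<Longrightarrow> integrable M (f i))
    \<Longrightarrow> cexp M Z z (\<lambda>\<omega>. \<Sum>i\<in>I. f i \<omega>) = (\<Sum>i\<in>I. cexp M Z z (f i))"
  unfolding cexp_def
  by (simp add: integrable_indicator_event sum_distrib_left sum_divide_distrib)

end

lemma ccov_commute: "ccov M Z z U V = ccov M Z z V U"
  unfolding ccov_def by (simp add: mult.commute)

context
  fixes M :: "'a measure" and Z :: "'a \<Rightarrow> 'z" and z :: 'z
  assumes fin: "finite_measure M" and event: "{\<omega>\<in>space M. Z \<omega> = z} \<in> sets M"
begin

lemma integrable_centered_mult:
  assumes "square_integrable M U" "square_integrable M V"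
  shows "integrable M (\<lambda>\<omega>. (U \<omega> - a) * (V \<omega> - b))"
  using assms by (intro integrable_mult_square_integrable square_integrable_diff square_integrable_const fin)

lemma ccov_diff_left:
  assumes U1: "square_integrable M U1" and U2: "square_integrable M U2"
    and V: "square_integrable M V"
  shows "ccov M Z z (\<lambda>\<omega>. U1 \<omega> - U2 \<omega>) V = ccov M Z z U1 V - ccov M Z z U2 V"
proof -
  define e where "e U = cexp M Z z U" for U
  have diff: "e (\<lambda>\<omega>. U1 \<omega> - U2 \<omega>) = e U1 - e U2"
    unfolding e_def using U1 U2 by (intro cexp_diff event integrable_square_integrable fin)
  have "(\<lambda>\<omega>. (U1 \<omega> - U2 \<omega> - e (\<lambda>\<omega>. U1 \<omega> - U2 \<omega>)) * (V \<omega> - e V))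
      = (\<lambda>\<omega>. (U1 \<omega> - e U1) * (V \<omega> - e V) - (U2 \<omega> - e U2) * (V \<omega> - e V))"
    unfolding diff by (simp add: algebra_simps)
  then show ?thesis
    unfolding ccov_def e_def[symmetric]
    using cexp_diff[OF event integrable_centered_mult[OF U1 V] integrable_centered_mult[OF U2 V]]
    by (simp add: e_def)
qed

lemma ccov_sum_left:
  assumes I: "finite I" and f: "\<And>i. i \<in> I \<Longrightarrow> square_integrable M (f i)"
    and V: "square_integrable M V"
  shows "ccov M Z z (\<lambda>\<omega>. \<Sum>i\<in>I. c i * f i \<omega>) V = (\<Sum>i\<in>I. c i * ccov M Z z (f i) V)"
proof -
  define e where "e U = cexp M Z z U" for U
  have sum: "e (\<lambda>\<omega>. \<Sum>i\<in>I. c i * f i \<omega>) = (\<Sum>i\<in>I. c i * e (f i))"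
    unfolding e_def using f by (simp add: cexp_sum[OF event] cexp_scale integrable_square_integrable[OF fin])
  have "ccov M Z z (\<lambda>\<omega>. \<Sum>i\<in>I. c i * f i \<omega>) V
      = e (\<lambda>\<omega>. \<Sum>i\<in>I. c i * ((f i \<omega> - e (f i)) * (V \<omega> - e V)))"
    unfolding ccov_def e_def[symmetric] sum
  proof (intro arg_cong[where f = e] ext)
    fix \<omega>
    have "(\<Sum>i\<in>I. c i * f i \<omega>) - (\<Sum>i\<in>I. c i * e (f i)) = (\<Sum>i\<in>I. c i * (f i \<omega> - e (f i)))"
      by (simp add: sum_subtractf right_diff_distrib)
    then show "((\<Sum>i\<in>I. c i * f i \<omega>) - (\<Sum>i\<in>I. c i * e (f i))) * (V \<omega> - e V)
        = (\<Sum>i\<in>I. c i * ((f i \<omega> - e (f i)) * (V \<omega> - e V)))"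
      by (simp add: sum_distrib_right mult.assoc)
  qed
  also have "\<dots> = (\<Sum>i\<in>I. e (\<lambda>\<omega>. c i * ((f i \<omega> - e (f i)) * (V \<omega> - e V))))"
    unfolding e_def by (intro cexp_sum event) (simp add: integrable_centered_mult f V)
  finally show ?thesis
    by (simp add: e_def cexp_scale ccov_def)
qed

end

lemma pos_def_mult_matrix_inv:
  fixes A :: "real^'n^'n"
  assumes "pos_def A"
  shows "A *v (matrix_inv A *v c) = c"
proof -
  have "A *v x = 0 \<Longrightarrow> x = 0" for x
    using assms unfolding pos_def_def by force
  then have "invertible A"
    using matrix_left_invertible_ker invertible_left_inverse by blast
  then have "A ** matrix_inv A = mat 1"
    unfolding invertible_def matrix_inv_def by (rule someI2_ex) blast
  then show ?thesis by (simp add: matrix_vector_mul_assoc)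
qed

lemma qf_nonneg: "pos_def A \<Longrightarrow> 0 \<le> qf A v"
  unfolding pos_def_def qf_def by (cases "v = 0") (auto intro: less_imp_le)

lemma qf_eq_0_iff: "pos_def A \<Longrightarrow> qf A v = 0 \<longleftrightarrow> v = 0"
  unfolding pos_def_def qf_def by force

lemma inner_mult_symmetric_commute:
  fixes A :: "real^'n^'n"
  assumes "transpose A = A"
  shows "x \<bullet> (A *v y) = y \<bullet> (A *v x)"
  by (metis assms dot_lmul_matrix inner_commute vector_transpose_matrix)

lemma cvarX_symmetric: "transpose (cvarX M Z z X) = cvarX M Z z X"
  unfolding transpose_def cvarX_def ccov_def by (simp add: mult.commute)

lemma qf_weighted_split:
  fixes A :: "real^'n^'n"
  assumes "0 < p" "0 < q"
  shows "qf A u / p + qf A v / q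
       = qf A (q *\<^sub>R u + p *\<^sub>R v) / (p * q * (p + q)) + qf A (u - v) / (p + q)"
proof -
  define cross where "cross = u \<bullet> (A *v v) + v \<bullet> (A *v u)"
  have sum: "qf A (q *\<^sub>R u + p *\<^sub>R v) = q * q * qf A u + p * q * cross + p * p * qf A v"
    unfolding qf_def cross_def by (simp add: algebra_simps)
  have diff: "qf A (u - v) = qf A u - cross + qf A v"
    unfolding qf_def cross_def
    by (simp add: inner_diff_left inner_diff_right matrix_vector_mult_diff_distrib)
  have "p \<noteq> 0" "q \<noteq> 0" "p + q \<noteq> 0" using assms by auto
  then show ?thesis
    unfolding sum diff by (simp add: divide_simps) (simp add: algebra_simps)
qed

lemma inner_eq_sum_components: "(x::real^'n) \<bullet> b = (\<Sum>i\<in>UNIV. b $ i * x $ i)"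
  unfolding inner_vec_def by (simp add: mult.commute)

context
  fixes M :: "'a measure" and Z :: "'a \<Rightarrow> 'z" and z :: 'z and X :: "'a \<Rightarrow> real^'n"
  assumes fin: "finite_measure M" and event: "{\<omega>\<in>space M. Z \<omega> = z} \<in> sets M"
    and X: "\<And>i. square_integrable M (\<lambda>\<omega>. X \<omega> $ i)"
begin

lemma square_integrable_inner: "square_integrable M (\<lambda>\<omega>. X \<omega> \<bullet> b)"
  unfolding inner_eq_sum_components by (intro square_integrable_sum square_integrable_scale X) simp

lemma ccov_inner_left:
  assumes "square_integrable M V"
  shows "ccov M Z z (\<lambda>\<omega>. X \<omega> \<bullet> b) V = b \<bullet> ccovXY M Z z X V"
  unfolding inner_eq_sum_components
  by (simp add: ccov_sum_left[OF fin event _ X assms] ccovXY_def inner_vec_def mult.commute)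

lemma ccov_inner_inner: "ccov M Z z (\<lambda>\<omega>. X \<omega> \<bullet> b) (\<lambda>\<omega>. X \<omega> \<bullet> b) = qf (cvarX M Z z X) b"
proof -
  have "ccov M Z z (\<lambda>\<omega>. X \<omega> $ i) (\<lambda>\<omega>. X \<omega> \<bullet> b)
      = (\<Sum>j\<in>UNIV. ccov M Z z (\<lambda>\<omega>. X \<omega> $ i) (\<lambda>\<omega>. X \<omega> $ j) * b $ j)" for i
    unfolding ccov_commute[of M Z z "\<lambda>\<omega>. X \<omega> $ i"] ccov_inner_left[OF X]
    by (simp add: ccovXY_def inner_vec_def ccov_commute mult.commute)
  then show ?thesis
    unfolding ccov_inner_left[OF square_integrable_inner]
    by (simp add: ccovXY_def qf_def cvarX_def inner_vec_def matrix_vector_mult_def)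
qed

lemma cvar_diff_inner:
  assumes Y: "square_integrable M Y"
  shows "cvar M Z z (\<lambda>\<omega>. Y \<omega> - X \<omega> \<bullet> b)
       = cvar M Z z Y - 2 * (b \<bullet> ccovXY M Z z X Y) + qf (cvarX M Z z X) b"
proof -
  let ?S = "\<lambda>\<omega>. X \<omega> \<bullet> b"
  have S: "square_integrable M ?S" by (rule square_integrable_inner)
  have YS: "square_integrable M (\<lambda>\<omega>. Y \<omega> - ?S \<omega>)" by (rule square_integrable_diff[OF Y S])
  have "cvar M Z z (\<lambda>\<omega>. Y \<omega> - ?S \<omega>)
      = ccov M Z z Y (\<lambda>\<omega>. Y \<omega> - ?S \<omega>) - ccov M Z z ?S (\<lambda>\<omega>. Y \<omega> - ?S \<omega>)"
    unfolding cvar_def by (rule ccov_diff_left[OF fin event Y S YS])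
  also have "ccov M Z z Y (\<lambda>\<omega>. Y \<omega> - ?S \<omega>) = ccov M Z z Y Y - ccov M Z z ?S Y"
    by (subst ccov_commute) (rule ccov_diff_left[OF fin event Y S Y])
  also have "ccov M Z z ?S (\<lambda>\<omega>. Y \<omega> - ?S \<omega>) = ccov M Z z Y ?S - ccov M Z z ?S ?S"
    by (subst ccov_commute) (rule ccov_diff_left[OF fin event Y S S])
  finally show ?thesis
    by (simp add: cvar_def ccov_commute[of M Z z Y ?S] ccov_inner_left[OF Y] ccov_inner_inner)
qed

lemma cvar_diff_inner_betaC:
  assumes pos: "pos_def (cvarX M Z z X)" and Y: "square_integrable M Y"
  shows "cvar M Z z (\<lambda>\<omega>. Y \<omega> - X \<omega> \<bullet> c)
       = cvar M Z z (\<lambda>\<omega>. Y \<omega> - X \<omega> \<bullet> betaC M Z z X Y) + qf (cvarX M Z z X) (betaC M Z z X Y - c)"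
proof -
  let ?V = "cvarX M Z z X" and ?\<beta> = "betaC M Z z X Y"
  have cov: "ccovXY M Z z X Y = ?V *v ?\<beta>"
    unfolding betaC_def pos_def_mult_matrix_inv[OF pos] ..
  have "c \<bullet> (?V *v ?\<beta>) = ?\<beta> \<bullet> (?V *v c)"
    by (rule inner_mult_symmetric_commute[OF cvarX_symmetric])
  then show ?thesis
    unfolding cvar_diff_inner[OF Y] cov
    by (simp add: qf_def inner_diff_left inner_diff_right matrix_vector_mult_diff_distrib)
qed

end


lemma qf_excess_eq:
  fixes A :: "real^'n^'n"
  assumes "0 < p" "0 < q"
  shows "qf A (a - c) / p + qf A (b - c) / q - qf A (a - b)
       = qf A (q *\<^sub>R a + p *\<^sub>R b - (p + q) *\<^sub>R c) / (p * q * (p + q))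
         + qf A (a - b) * (1 / (p + q) - 1)"
proof -
  have "q *\<^sub>R (a - c) + p *\<^sub>R (b - c) = q *\<^sub>R a + p *\<^sub>R b - (p + q) *\<^sub>R c"
    by (simp add: algebra_simps)
  then show ?thesis
    using qf_weighted_split[OF assms, of A "a - c" "b - c"] by (simp add: algebra_simps)
qed

lemma
  fixes A :: "real^'n^'n"
  assumes A: "pos_def A" and p: "0 < p" and q: "0 < q" and pq: "p + q \<le> 1"
  shows qf_excess_nonneg: "0 \<le> qf A w / (p * q * (p + q)) + qf A d * (1 / (p + q) - 1)"
    and qf_excess_eq_0_iff: "qf A w / (p * q * (p + q)) + qf A d * (1 / (p + q) - 1) = 0
          \<longleftrightarrow> w = 0 \<and> (1 - p - q) *\<^sub>R d = 0"
proof -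
  have k: "0 \<le> 1 / (p + q) - 1" and k0: "1 / (p + q) - 1 = 0 \<longleftrightarrow> 1 - p - q = 0"
    using p q pq by (auto simp: field_simps)
  have w: "0 \<le> qf A w / (p * q * (p + q))" and d: "0 \<le> qf A d * (1 / (p + q) - 1)"
    using qf_nonneg[OF A] p q k by simp_all
  then show "0 \<le> qf A w / (p * q * (p + q)) + qf A d * (1 / (p + q) - 1)" by simp
  from w d have "qf A w / (p * q * (p + q)) + qf A d * (1 / (p + q) - 1) = 0
      \<longleftrightarrow> qf A w / (p * q * (p + q)) = 0 \<and> qf A d * (1 / (p + q) - 1) = 0"
    by linarith
  also have "\<dots> \<longleftrightarrow> w = 0 \<and> (1 - p - q) *\<^sub>R d = 0"
    using qf_eq_0_iff[OF A] k0 p q by auto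
  finally show "qf A w / (p * q * (p + q)) + qf A d * (1 / (p + q) - 1) = 0
      \<longleftrightarrow> w = 0 \<and> (1 - p - q) *\<^sub>R d = 0" .
qed

lemma stratified_qf_excess:
  fixes V :: "'z \<Rightarrow> real^'n^'n" and a b c :: "'z \<Rightarrow> real^'n" and P :: "'z \<Rightarrow> real"
  assumes Zs: "finite Zs" and P: "\<And>z. z \<in> Zs \<Longrightarrow> 0 < P z"
    and V: "\<And>z. z \<in> Zs \<Longrightarrow> pos_def (V z)"
    and p: "0 < p" and q: "0 < q" and pq: "p + q \<le> 1"
  defines "excess \<equiv> \<Sum>z\<in>Zs. (qf (V z) (a z - c z) / p + qf (V z) (b z - c z) / q
                                - qf (V z) (a z - b z)) * P z"
  shows "excess = (\<Sum>z\<in>Zs. qf (V z) (q *\<^sub>R a z + p *\<^sub>R b z - (p + q) *\<^sub>R c z) * P z)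
                    / (p * q * (p + q))
                + (\<Sum>z\<in>Zs. qf (V z) (a z - b z) * P z) * (1 / (p + q) - 1)"
    and "0 \<le> excess"
    and "excess = 0 \<longleftrightarrow> (\<forall>z\<in>Zs. q *\<^sub>R a z + p *\<^sub>R b z - (p + q) *\<^sub>R c z = 0
                                 \<and> (1 - p - q) *\<^sub>R (a z - b z) = 0)"
proof -
  define w where "w z = q *\<^sub>R a z + p *\<^sub>R b z - (p + q) *\<^sub>R c z" for z
  define h where "h z = qf (V z) (w z) / (p * q * (p + q)) + qf (V z) (a z - b z) * (1 / (p + q) - 1)"
    for z
  have excess: "excess = (\<Sum>z\<in>Zs. h z * P z)"
    unfolding excess_def h_def w_def qf_excess_eq[OF p q] ..
  have "h z * P z = qf (V z) (w z) * P z / (p * q * (p + q))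
      + qf (V z) (a z - b z) * P z * (1 / (p + q) - 1)" for z
    unfolding h_def by (simp add: algebra_simps)
  then show "excess = (\<Sum>z\<in>Zs. qf (V z) (q *\<^sub>R a z + p *\<^sub>R b z - (p + q) *\<^sub>R c z) * P z)
                    / (p * q * (p + q))
                + (\<Sum>z\<in>Zs. qf (V z) (a z - b z) * P z) * (1 / (p + q) - 1)"
    unfolding excess w_def by (simp add: sum.distrib sum_divide_distrib sum_distrib_right)
  have h: "0 \<le> h z * P z" if "z \<in> Zs" for z
    unfolding h_def using qf_excess_nonneg[OF V[OF that] p q pq] P[OF that] by simp
  then show "0 \<le> excess" unfolding excess by (rule sum_nonneg)
  show "excess = 0 \<longleftrightarrow> (\<forall>z\<in>Zs. q *\<^sub>R a z + p *\<^sub>R b z - (p + q) *\<^sub>R c z = 0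
                                 \<and> (1 - p - q) *\<^sub>R (a z - b z) = 0)"
  proof -
    have "excess = 0 \<longleftrightarrow> (\<forall>z\<in>Zs. h z * P z = 0)"
      unfolding excess by (rule sum_nonneg_eq_0_iff[OF Zs h])
    also have "\<dots> \<longleftrightarrow> (\<forall>z\<in>Zs. h z = 0)"
      using P by (metis mult_eq_0_iff less_irrefl)
    finally show ?thesis
      by (simp add: h_def w_def qf_excess_eq_0_iff[OF V p q pq])
  qed
qed

context
  fixes M :: "'a measure" and Z :: "'a \<Rightarrow> 'z" and Zs :: "'z set"
  assumes fin: "finite_measure M" and Z: "Z \<in> measurable M (count_space UNIV)"
    and Zs: "finite Zs" and range: "\<And>\<omega>. \<omega> \<in> space M \<Longrightarrow> Z \<omega> \<in> Zs"
begin

lemma strata_sets: "{\<omega>\<in>space M. Z \<omega> = z} \<in> sets M"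
  using Z by measurable

lemma integral_strata:
  "(\<integral>\<omega>. G (Z \<omega>) \<partial>M) = (\<Sum>z\<in>Zs. G z * measure M {\<omega>\<in>space M. Z \<omega> = z})"
proof -
  interpret finite_measure M by (rule fin)
  have "(\<integral>\<omega>. G (Z \<omega>) \<partial>M) = (\<integral>\<omega>. (\<Sum>z\<in>Zs. G z * indicator {\<omega>\<in>space M. Z \<omega> = z} \<omega>) \<partial>M)"
  proof (rule Bochner_Integration.integral_cong[OF refl])
    fix \<omega> assume "\<omega> \<in> space M"
    then have "(\<Sum>z\<in>Zs. G z * indicator {\<omega>\<in>space M. Z \<omega> = z} \<omega>) = (\<Sum>z\<in>Zs. if Z \<omega> = z then G z else 0)"
      by (intro sum.cong) (auto simp: indicator_def)
    with Zs range \<open>\<omega> \<in> space M\<close> show "G (Z \<omega>) = (\<Sum>z\<in>Zs. G z * indicator {\<omega>\<in>space M. Z \<omega> = z} \<omega>)"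
      by simp
  qed
  also have "\<dots> = (\<Sum>z\<in>Zs. (\<integral>\<omega>. G z * indicator {\<omega>\<in>space M. Z \<omega> = z} \<omega> \<partial>M))"
    by (rule Bochner_Integration.integral_sum) (simp add: strata_sets less_top[symmetric])
  also have "\<dots> = (\<Sum>z\<in>Zs. G z * measure M {\<omega>\<in>space M. Z \<omega> = z})"
    using strata_sets by (simp add: emeasure_eq_measure)
  finally show ?thesis .
qed

lemma integral_cvar_excess:
  fixes X :: "'a \<Rightarrow> real^'n" and c :: "'z \<Rightarrow> real^'n"
  assumes X: "\<And>i. square_integrable M (\<lambda>\<omega>. X \<omega> $ i)"
    and Y: "square_integrable M Y" and Y': "square_integrable M Y'"
    and pos: "\<And>z. z \<in> Zs \<Longrightarrow> pos_def (cvarX M Z z X)"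
  defines "\<beta> \<equiv> \<lambda>z. betaC M Z z X Y" and "\<beta>' \<equiv> \<lambda>z. betaC M Z z X Y'"
    and "V \<equiv> \<lambda>z. cvarX M Z z X"
  shows "(\<integral>\<omega>. cvar M Z (Z \<omega>) (\<lambda>\<omega>'. Y \<omega>' - X \<omega>' \<bullet> c (Z \<omega>)) / p
              + cvar M Z (Z \<omega>) (\<lambda>\<omega>'. Y' \<omega>' - X \<omega>' \<bullet> c (Z \<omega>)) / q \<partial>M)
       - ((\<integral>\<omega>. cvar M Z (Z \<omega>) (\<lambda>\<omega>'. Y \<omega>' - X \<omega>' \<bullet> \<beta> (Z \<omega>)) / p
              + cvar M Z (Z \<omega>) (\<lambda>\<omega>'. Y' \<omega>' - X \<omega>' \<bullet> \<beta>' (Z \<omega>)) / q \<partial>M)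
          + (\<integral>\<omega>. qf (V (Z \<omega>)) (\<beta> (Z \<omega>) - \<beta>' (Z \<omega>)) \<partial>M))
     = (\<integral>\<omega>. qf (V (Z \<omega>)) (\<beta> (Z \<omega>) - c (Z \<omega>)) / p + qf (V (Z \<omega>)) (\<beta>' (Z \<omega>) - c (Z \<omega>)) / q
              - qf (V (Z \<omega>)) (\<beta> (Z \<omega>) - \<beta>' (Z \<omega>)) \<partial>M)"
proof -
  have decomp: "cvar M Z z (\<lambda>\<omega>. U \<omega> - X \<omega> \<bullet> b)
      = cvar M Z z (\<lambda>\<omega>. U \<omega> - X \<omega> \<bullet> betaC M Z z X U) + qf (V z) (betaC M Z z X U - b)"
    if "z \<in> Zs" "square_integrable M U" for z U b
    unfolding V_def by (rule cvar_diff_inner_betaC[OF fin strata_sets X pos[OF that(1)] that(2)])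
  show ?thesis
    apply (subst (1 2 3 4) integral_strata)
    unfolding sum_subtractf[symmetric] sum.distrib[symmetric] left_diff_distrib[symmetric]
      distrib_right[symmetric]
    apply (intro sum.cong refl)
    subgoal for z
      using decomp[OF _ Y, of z "c z"] decomp[OF _ Y', of z "c z"]
      by (simp add: \<beta>_def \<beta>'_def add_divide_distrib)
    done
qed

lemma integral_qf_excess:
  fixes V :: "'z \<Rightarrow> real^'n^'n" and a b c :: "'z \<Rightarrow> real^'n"
  assumes P: "\<And>z. z \<in> Zs \<Longrightarrow> 0 < measure M {\<omega>\<in>space M. Z \<omega> = z}"
    and V: "\<And>z. z \<in> Zs \<Longrightarrow> pos_def (V z)"
    and p: "0 < p" and q: "0 < q" and pq: "p + q \<le> 1"
  defines "excess \<equiv> \<integral>\<omega>. qf (V (Z \<omega>)) (a (Z \<omega>) - c (Z \<omega>)) / p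
      + qf (V (Z \<omega>)) (b (Z \<omega>) - c (Z \<omega>)) / q - qf (V (Z \<omega>)) (a (Z \<omega>) - b (Z \<omega>)) \<partial>M"
  shows "excess = (\<integral>\<omega>. qf (V (Z \<omega>)) (q *\<^sub>R a (Z \<omega>) + p *\<^sub>R b (Z \<omega>) - (p + q) *\<^sub>R c (Z \<omega>)) \<partial>M)
                    / (p * q * (p + q))
                + (\<integral>\<omega>. qf (V (Z \<omega>)) (a (Z \<omega>) - b (Z \<omega>)) \<partial>M) * (1 / (p + q) - 1)"
    and "excess = (\<integral>\<omega>. qf (V (Z \<omega>)) (a (Z \<omega>) - c (Z \<omega>)) \<partial>M) / p
                + (\<integral>\<omega>. qf (V (Z \<omega>)) (b (Z \<omega>) - c (Z \<omega>)) \<partial>M) / q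
                - (\<integral>\<omega>. qf (V (Z \<omega>)) (a (Z \<omega>) - b (Z \<omega>)) \<partial>M)"
    and "0 \<le> excess"
    and "excess = 0 \<longleftrightarrow> (\<forall>z\<in>Zs. q *\<^sub>R a z + p *\<^sub>R b z - (p + q) *\<^sub>R c z = 0
                                 \<and> (1 - p - q) *\<^sub>R (a z - b z) = 0)"
proof -
  note sums = stratified_qf_excess[OF Zs P V p q pq, where a = a and b = b and c = c]
  have excess: "excess = (\<Sum>z\<in>Zs. (qf (V z) (a z - c z) / p + qf (V z) (b z - c z) / q
      - qf (V z) (a z - b z)) * measure M {\<omega>\<in>space M. Z \<omega> = z})"
    unfolding excess_def by (rule integral_strata)
  show "excess = (\<integral>\<omega>. qf (V (Z \<omega>)) (q *\<^sub>R a (Z \<omega>) + p *\<^sub>R b (Z \<omega>) - (p + q) *\<^sub>R c (Z \<omega>)) \<partial>M)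
                    / (p * q * (p + q))
                + (\<integral>\<omega>. qf (V (Z \<omega>)) (a (Z \<omega>) - b (Z \<omega>)) \<partial>M) * (1 / (p + q) - 1)"
    unfolding excess by (subst (1 2) integral_strata) (rule sums(1))
  show "excess = (\<integral>\<omega>. qf (V (Z \<omega>)) (a (Z \<omega>) - c (Z \<omega>)) \<partial>M) / p
                + (\<integral>\<omega>. qf (V (Z \<omega>)) (b (Z \<omega>) - c (Z \<omega>)) \<partial>M) / q
                - (\<integral>\<omega>. qf (V (Z \<omega>)) (a (Z \<omega>) - b (Z \<omega>)) \<partial>M)"
    unfolding excess
    by (subst (1 2 3) integral_strata)
      (simp add: sum_subtractf sum.distrib sum_divide_distrib left_diff_distrib distrib_right)
  show "0 \<le> excess" unfolding excess by (rule sums(2))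
  show "excess = 0 \<longleftrightarrow> (\<forall>z\<in>Zs. q *\<^sub>R a z + p *\<^sub>R b z - (p + q) *\<^sub>R c z = 0
                                 \<and> (1 - p - q) *\<^sub>R (a z - b z) = 0)"
    unfolding excess by (rule sums(3))
qed

end

lemma add_le_sum_UNIV:
  fixes f :: "'k::finite \<Rightarrow> real"
  assumes "\<And>l. 0 \<le> f l" and "s \<noteq> t"
  shows "f t + f s \<le> (\<Sum>l\<in>UNIV. f l)"
proof -
  have "f t + f s = (\<Sum>l\<in>{t, s}. f l)" using assms(2) by simp
  also have "\<dots> \<le> (\<Sum>l\<in>UNIV. f l)" by (rule sum_mono2) (use assms(1) in auto)
  finally show ?thesis .
qed

theorem theorem2:
  fixes M :: "'a measure"
    and \<pi> :: "'k::finite \<Rightarrow> real"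
    and s t :: 'k
    and YV :: "'a \<Rightarrow> real^'k" and W :: "'a \<Rightarrow> real^'q::finite"
    and YVs :: "nat \<Rightarrow> 'a \<Rightarrow> real^'k" and Ws :: "nat \<Rightarrow> 'a \<Rightarrow> real^'q"
    and In :: "nat \<Rightarrow> nat \<Rightarrow> 'a \<Rightarrow> 'k"
    and zf :: "real^'q \<Rightarrow> 'z" and xf :: "real^'q \<Rightarrow> real^'p::finite"
    and Zs :: "'z set"
    and Z :: "'a \<Rightarrow> 'z" and X :: "'a \<Rightarrow> real^'p"
    and \<beta> :: "'k \<Rightarrow> 'z \<Rightarrow> real^'p" and bb :: "'z \<Rightarrow> real^'p"
    and V :: "'z \<Rightarrow> real^'p^'p" and \<sigma>U \<sigma>A \<sigma>B :: real
  assumes Z_def: "Z = (\<lambda>\<omega>. zf (W \<omega>))"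
    and X_def: "X = (\<lambda>\<omega>. xf (W \<omega>))"
    and beta_def: "\<beta> = (\<lambda>l z. betaC M Z z X (\<lambda>\<omega>. YV \<omega> $ l))"
    and bb_def: "bb = (\<lambda>z. \<Sum>l\<in>UNIV. \<pi> l *\<^sub>R \<beta> l z)"
    and V_def: "V = (\<lambda>z. cvarX M Z z X)"
    and sU_def: "\<sigma>U = (\<integral>\<omega>. cvar M Z (Z \<omega>) (\<lambda>\<omega>'. YV \<omega>' $ t) / \<pi> t
                     + cvar M Z (Z \<omega>) (\<lambda>\<omega>'. YV \<omega>' $ s) / \<pi> s \<partial>M)"
    and sA_def: "\<sigma>A = (\<integral>\<omega>. cvar M Z (Z \<omega>) (\<lambda>\<omega>'. YV \<omega>' $ t - X \<omega>' \<bullet> \<beta> t (Z \<omega>)) / \<pi> t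
                     + cvar M Z (Z \<omega>) (\<lambda>\<omega>'. YV \<omega>' $ s - X \<omega>' \<bullet> \<beta> s (Z \<omega>)) / \<pi> s \<partial>M)
              + (\<integral>\<omega>. qf (V (Z \<omega>)) (\<beta> t (Z \<omega>) - \<beta> s (Z \<omega>)) \<partial>M)"
    and sB_def: "\<sigma>B = (\<integral>\<omega>. cvar M Z (Z \<omega>) (\<lambda>\<omega>'. YV \<omega>' $ t - X \<omega>' \<bullet> bb (Z \<omega>)) / \<pi> t
                     + cvar M Z (Z \<omega>) (\<lambda>\<omega>'. YV \<omega>' $ s - X \<omega>' \<bullet> bb (Z \<omega>)) / \<pi> s \<partial>M)"
    and P: "prob_space M"
    and st: "s \<noteq> t"
    and pi_pos: "\<And>l. 0 < \<pi> l" and pi_lt1: "\<And>l. \<pi> l < 1" and pi_sum: "(\<Sum>l\<in>UNIV. \<pi> l) = 1"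
    \<comment> \<open>measurability of generic and sample variables and of the functions defining Z and X\<close>
    and meas_YV: "YV \<in> borel_measurable M" and meas_W: "W \<in> borel_measurable M"
    and meas_YVs: "\<And>i. YVs i \<in> borel_measurable M" and meas_Ws: "\<And>i. Ws i \<in> borel_measurable M"
    and meas_In: "\<And>n i. In n i \<in> measurable M (count_space UNIV)"
    and meas_zf: "zf \<in> measurable borel (count_space UNIV)"
    and meas_xf: "xf \<in> borel_measurable borel"
    \<comment> \<open>(C1): i.i.d. sample distributed as the generic variables; finite second moments\<close>
    and C1_indep: "prob_space.indep_vars M (\<lambda>_. borel) (\<lambda>i \<omega>. (YVs i \<omega>, Ws i \<omega>)) UNIV"
    and C1_dist: "\<And>i. distr M borel (\<lambda>\<omega>. (YVs i \<omega>, Ws i \<omega>)) = distr M borel (\<lambda>\<omega>. (YV \<omega>, W \<omega>))"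
    and C1_mom: "\<And>l. integrable M (\<lambda>\<omega>. (YV \<omega> $ l)\<^sup>2)"
    \<comment> \<open>(C2): assignments and sample conditionally independent given Z_1,...,Z_n\<close>
    and C2: "\<And>n (a :: nat \<Rightarrow> 'k) (zz :: nat \<Rightarrow> 'z) B.
      B \<in> sets (PiM {..<n} (\<lambda>_. borel)) \<Longrightarrow>
      measure M {\<omega>\<in>space M. (\<forall>i<n. In n i \<omega> = a i) \<and> (\<lambda>i\<in>{..<n}. (YVs i \<omega>, Ws i \<omega>)) \<in> B
                            \<and> (\<forall>i<n. zf (Ws i \<omega>) = zz i)}
      * measure M {\<omega>\<in>space M. \<forall>i<n. zf (Ws i \<omega>) = zz i}
      = measure M {\<omega>\<in>space M. (\<forall>i<n. In n i \<omega> = a i) \<and> (\<forall>i<n. zf (Ws i \<omega>) = zz i)}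
      * measure M {\<omega>\<in>space M. (\<lambda>i\<in>{..<n}. (YVs i \<omega>, Ws i \<omega>)) \<in> B
                            \<and> (\<forall>i<n. zf (Ws i \<omega>) = zz i)}"
    \<comment> \<open>(C3): Z takes finitely many values in Zs; assignment probabilities; balance\<close>
    and C3_fin: "finite Zs" and C3_vals: "\<And>w. zf w \<in> Zs"
    and C3_pos: "\<And>z. z \<in> Zs \<Longrightarrow> measure M {\<omega>\<in>space M. Z \<omega> = z} > 0"
    and C3_assign: "\<And>n i l (zz :: nat \<Rightarrow> 'z). i < n \<Longrightarrow>
      measure M {\<omega>\<in>space M. In n i \<omega> = l \<and> (\<forall>j<n. zf (Ws j \<omega>) = zz j)}
      = \<pi> l * measure M {\<omega>\<in>space M. \<forall>j<n. zf (Ws j \<omega>) = zz j}"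
    and C3_bal: "\<And>z l \<epsilon>. z \<in> Zs \<Longrightarrow> \<epsilon> > 0 \<Longrightarrow>
      (\<lambda>n. measure M {\<omega>\<in>space M.
         \<bar>(real (card {i. i < n \<and> zf (Ws i \<omega>) = z \<and> In n i \<omega> = l})
            - \<pi> l * real (card {i. i < n \<and> zf (Ws i \<omega>) = z}))
          / real (card {i. i < n \<and> zf (Ws i \<omega>) = z})\<bar> > \<epsilon>}) \<longlonglongrightarrow> 0"
    \<comment> \<open>moment conditions on X and X Y^(l); positive definiteness of var(X | Z = z)\<close>
    and momX: "integrable M (\<lambda>\<omega>. (norm (X \<omega>))\<^sup>2)"
    and momXY: "\<And>l. integrable M (\<lambda>\<omega>. (norm (YV \<omega> $ l *\<^sub>R X \<omega>))\<^sup>2)"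
    and posdef: "\<And>z. z \<in> Zs \<Longrightarrow> pos_def (V z)"
  shows "(\<sigma>U - \<sigma>A =
           (\<integral>\<omega>. qf (V (Z \<omega>)) (\<pi> s *\<^sub>R \<beta> t (Z \<omega>) + \<pi> t *\<^sub>R \<beta> s (Z \<omega>)) \<partial>M)
             / (\<pi> t * \<pi> s * (\<pi> t + \<pi> s))
         + (\<integral>\<omega>. qf (V (Z \<omega>)) (\<beta> t (Z \<omega>) - \<beta> s (Z \<omega>)) \<partial>M) * (1 / (\<pi> t + \<pi> s) - 1))
    \<and> (\<sigma>B - \<sigma>A =
           (\<integral>\<omega>. qf (V (Z \<omega>)) (\<beta> t (Z \<omega>) - bb (Z \<omega>)) \<partial>M) / \<pi> t
         + (\<integral>\<omega>. qf (V (Z \<omega>)) (\<beta> s (Z \<omega>) - bb (Z \<omega>)) \<partial>M) / \<pi> s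
         - (\<integral>\<omega>. qf (V (Z \<omega>)) (\<beta> t (Z \<omega>) - \<beta> s (Z \<omega>)) \<partial>M))
    \<and> (\<sigma>A \<le> \<sigma>U \<and>
         (\<sigma>A = \<sigma>U \<longleftrightarrow> (\<forall>z\<in>Zs. \<pi> s *\<^sub>R \<beta> t z + \<pi> t *\<^sub>R \<beta> s z = 0
                               \<and> (1 - \<pi> t - \<pi> s) *\<^sub>R (\<beta> t z - \<beta> s z) = 0)))
    \<and> (\<sigma>A \<le> \<sigma>B \<and>
         (\<sigma>A = \<sigma>B \<longleftrightarrow> (\<forall>z\<in>Zs. bb z = (1 / (\<pi> s + \<pi> t)) *\<^sub>R (\<pi> s *\<^sub>R \<beta> t z + \<pi> t *\<^sub>R \<beta> s z)
                               \<and> (1 - \<pi> t - \<pi> s) *\<^sub>R (\<beta> t z - \<beta> s z) = 0)))"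
proof -
  interpret prob_space M by (rule P)
  have Z_meas: "Z \<in> measurable M (count_space UNIV)"
    unfolding Z_def by (rule measurable_compose[OF meas_W meas_zf])
  have range: "\<And>\<omega>. Z \<omega> \<in> Zs" unfolding Z_def by (rule C3_vals)
  have X_sq: "square_integrable M (\<lambda>\<omega>. X \<omega> $ i)" for i
    using momX unfolding X_def
    by (intro square_integrable_component measurable_compose[OF meas_W meas_xf])
  have Y_sq: "square_integrable M (\<lambda>\<omega>. YV \<omega> $ l)" for l
    unfolding square_integrable_def
    using C1_mom measurable_compose[OF meas_YV borel_measurable_nth] by simp
  have pq: "\<pi> t + \<pi> s \<le> 1"
    using add_le_sum_UNIV[of \<pi> s t] pi_pos pi_sum st by (simp add: less_imp_le)
  have gap: "(\<integral>\<omega>. cvar M Z (Z \<omega>) (\<lambda>\<omega>'. YV \<omega>' $ t - X \<omega>' \<bullet> c (Z \<omega>)) / \<pi> t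
      + cvar M Z (Z \<omega>) (\<lambda>\<omega>'. YV \<omega>' $ s - X \<omega>' \<bullet> c (Z \<omega>)) / \<pi> s \<partial>M) - \<sigma>A
    = (\<integral>\<omega>. qf (V (Z \<omega>)) (\<beta> t (Z \<omega>) - c (Z \<omega>)) / \<pi> t
      + qf (V (Z \<omega>)) (\<beta> s (Z \<omega>) - c (Z \<omega>)) / \<pi> s - qf (V (Z \<omega>)) (\<beta> t (Z \<omega>) - \<beta> s (Z \<omega>)) \<partial>M)"
    for c
    using posdef unfolding sA_def beta_def V_def
    by (intro integral_cvar_excess[OF finite_measure_axioms Z_meas C3_fin range X_sq Y_sq Y_sq])
  have "(\<integral>\<omega>. cvar M Z (Z \<omega>) (\<lambda>\<omega>'. YV \<omega>' $ t - X \<omega>' \<bullet> 0) / \<pi> t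
      + cvar M Z (Z \<omega>) (\<lambda>\<omega>'. YV \<omega>' $ s - X \<omega>' \<bullet> 0) / \<pi> s \<partial>M) = \<sigma>U"
    unfolding sU_def by simp
  note U = gap[of "\<lambda>_. 0", unfolded this] and B = gap[of bb, folded sB_def]
  note excess = integral_qf_excess[where V = V and a = "\<beta> t" and b = "\<beta> s",
      OF finite_measure_axioms Z_meas C3_fin range C3_pos posdef pi_pos pi_pos pq]
  have solve_bb: "x - r *\<^sub>R y = 0 \<longleftrightarrow> y = (1 / r) *\<^sub>R x" if "r \<noteq> 0" for x y :: "real^'p" and r
    using that by auto
  show ?thesis
    using excess[where c = "\<lambda>_. 0", folded U] excess[where c = bb, folded B]
      solve_bb[of "\<pi> t + \<pi> s"] pi_pos[of t] pi_pos[of s]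
    by (auto simp: add.commute)
qed

end
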